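(* Let $q\ge 4$ be even and $n\ge 3$ be odd. There does not exist an ordering $G(0),G(1),\ldots,G(q^n-1)$ of all of $\mathbb{Z}_q^n$ (indices taken modulo $q^n$) such that consecutive words $G(i),G(i+1)$ are at Lee distance $1$, and such that for every $i$ there is $\epsilon_i\in\{1,-1\}$ with $G(i)+(1,1,\ldots,1)=G(i+q^{n-1}+\epsilon_i)$.
   Context: The Lee distance between $v=(v_1,\ldots,v_n)$ and $u=(u_1,\ldots,u_n)$ in $\mathbb{Z}_q^n$ is $\sum_{i=1}^n \min\{|v_i-u_i|,\,q-|v_i-u_i|\}$, where $v_i,u_i$ are regarded as integers in $\{0,\ldots,q-1\}$. Addition of words is componentwise in $\mathbb{Z}_q$. *)

theory Defs
  imports Main
begin

definition words :: "nat \<Rightarrow> nat \<Rightarrow> nat list set" where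
  "words q n = {w. length w = n \<and> (\<forall>x\<in>set w. x < q)}"

definition lee_dist :: "nat \<Rightarrow> nat list \<Rightarrow> nat list \<Rightarrow> nat" where
  "lee_dist q v u = (\<Sum>i<length v.
      min (nat \<bar>int (v!i) - int (u!i)\<bar>) (q - nat \<bar>int (v!i) - int (u!i)\<bar>))"

definition word_add :: "nat \<Rightarrow> nat list \<Rightarrow> nat list \<Rightarrow> nat list" where
  "word_add q v u = map2 (\<lambda>a b. (a + b) mod q) v u"

definition all_ones :: "nat \<Rightarrow> nat list" where
  "all_ones n = replicate n 1"

end

theory Submission
  imports Defs "HOL-Library.Periodic_Fun"
begin

(* Extend the code periodically to g : Z -> Z_q^n and write g i + 1 = g (i + M + E i) with
   M = q^(n-1) and E i = +-1.  Since g i and g (i + 2) differ and adding 1 is injective,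
   E i = 1 forces E (i + 2) = 1; as N = q^n is even, E is constant on each parity class.
   If E is constant e, then adding 1 q times returns to the same word, so
   g (q (M + e)) = g 0 and q^n divides q e, which is absurd.
   Otherwise, after shifting indices by one, E is 1 on even and -1 on odd indices.  For even j
   the words g j and g (j + 3) are then the translates by 1 of two consecutive words, so the
   three unit moves from g j to g (j + 3) add up to a single unit move mod q (q >= 4); since the
   walk never returns after two steps, the moves at j and j + 2 use the same coordinate k, with
   equal signs exactly when the move at j + 1 also uses k.  Hence the sign of the move at j
   times (-1)^(g j ! k) is the same for all even j >= 0.
   Comparing j = 0 with j = M, where g M = g 1 + 1 and g (M + 1) = g 0 + 1, shows that the
   move at M reverses the move at 0 while preserving the parity of coordinate k: the invariant
   changes sign. *)

abbreviation add_ones :: "nat \<Rightarrow> nat \<Rightarrow> nat list \<Rightarrow> nat list" where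
  "add_ones q n w \<equiv> word_add q w (all_ones n)"

definition lee_step :: "nat \<Rightarrow> nat list \<Rightarrow> nat \<Rightarrow> int \<Rightarrow> nat list" where
  "lee_step q w k e = w[k := nat ((int (w ! k) + e) mod int q)]"

lemma words_nth_less: "w \<in> words q n \<Longrightarrow> k < n \<Longrightarrow> w ! k < q"
  by (simp add: words_def)

lemma words_eqI:
  assumes "v \<in> words q n" "u \<in> words q n"
    and "\<And>k. k < n \<Longrightarrow> int (v ! k) mod int q = int (u ! k) mod int q"
  shows "v = u"
proof (rule nth_equalityI)
  show "length v = length u" using assms(1,2) by (simp add: words_def)
  fix k assume "k < length v"
  then have "k < n" "v ! k < q" "u ! k < q" using assms(1,2) by (auto simp: words_def)
  then show "v ! k = u ! k" using assms(3)[of k] by (simp flip: of_nat_mod)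
qed

lemma lee_step_in_words: "w \<in> words q n \<Longrightarrow> 0 < q \<Longrightarrow> lee_step q w k e \<in> words q n"
  by (auto simp: words_def lee_step_def nat_less_iff dest!: set_update_subset_insert[THEN subsetD])

lemma int_nth_lee_step:
  assumes "w \<in> words q n" "j < n"
  shows "int (lee_step q w k e ! j) = (int (w ! j) + (if j = k then e else 0)) mod int q"
proof -
  have "j < length w" "w ! j < q" using assms by (auto simp: words_def)
  then show ?thesis by (simp add: lee_step_def)
qed

lemma nth_lee_step_other: "j \<noteq> k \<Longrightarrow> lee_step q w k e ! j = w ! j"
  by (simp add: lee_step_def)

lemma lee_step_inverse:
  assumes w: "w \<in> words q n" and "k < n"
  shows "lee_step q (lee_step q w k e) k (- e) = w"
proof (rule words_eqI)
  have "0 < q" using words_nth_less[OF assms] by simp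
  then have step: "lee_step q w k e \<in> words q n" by (rule lee_step_in_words[OF w])
  show "lee_step q (lee_step q w k e) k (- e) \<in> words q n"
    by (rule lee_step_in_words[OF step \<open>0 < q\<close>])
  show "int (lee_step q (lee_step q w k e) k (- e) ! j) mod int q = int (w ! j) mod int q"
    if "j < n" for j
    by (simp add: int_nth_lee_step[OF step that] int_nth_lee_step[OF w that] mod_add_left_eq)
qed (fact w)

lemma even_nth_lee_step:
  assumes "even q" "w \<in> words q n" "k < n" "e \<in> {1, -1}"
  shows "even (lee_step q w k e ! k) \<longleftrightarrow> odd (w ! k)"
proof -
  have "even (lee_step q w k e ! k) \<longleftrightarrow> even (int (lee_step q w k e ! k))" by simp
  also have "\<dots> \<longleftrightarrow> even ((int (w ! k) + e) mod int q)" by (simp add: int_nth_lee_step[OF assms(2,3)])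
  also have "\<dots> \<longleftrightarrow> even (int (w ! k) + e)" using assms(1) by (simp add: dvd_mod_iff)
  finally show ?thesis using assms(4) by auto
qed

lemma add_ones_in_words: "w \<in> words q n \<Longrightarrow> 0 < q \<Longrightarrow> add_ones q n w \<in> words q n"
  by (auto simp: words_def word_add_def all_ones_def set_zip)

lemma int_nth_add_ones:
  assumes "w \<in> words q n" "j < n"
  shows "int (add_ones q n w ! j) = (int (w ! j) + 1) mod int q"
  using assms by (simp add: words_def word_add_def all_ones_def zmod_int add.commute)

lemma add_ones_inj:
  assumes "v \<in> words q n" "u \<in> words q n" "add_ones q n v = add_ones q n u"
  shows "v = u"
proof (rule words_eqI[OF assms(1,2)])
  fix k assume "k < n"
  then have "(int (v ! k) + 1) mod int q = (int (u ! k) + 1) mod int q"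
    using assms by (metis int_nth_add_ones)
  then show "int (v ! k) mod int q = int (u ! k) mod int q"
    by (metis add_diff_cancel_right' mod_diff_left_eq)
qed

lemma add_ones_lee_step:
  assumes w: "w \<in> words q n"
  shows "add_ones q n (lee_step q w k e) = lee_step q (add_ones q n w) k e"
proof (cases "n = 0")
  case True
  then show ?thesis using w by (simp add: words_def word_add_def all_ones_def lee_step_def)
next
  case False
  then have "0 < q" using words_nth_less[OF w] by fastforce
  then have step: "lee_step q w k e \<in> words q n" and ones: "add_ones q n w \<in> words q n"
    using w by (simp_all add: lee_step_in_words add_ones_in_words)
  show ?thesis
  proof (rule words_eqI)
    show "add_ones q n (lee_step q w k e) \<in> words q n" by (rule add_ones_in_words[OF step \<open>0 < q\<close>])
    show "lee_step q (add_ones q n w) k e \<in> words q n" by (rule lee_step_in_words[OF ones \<open>0 < q\<close>])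
    show "int (add_ones q n (lee_step q w k e) ! j) mod int q
        = int (lee_step q (add_ones q n w) k e ! j) mod int q" if "j < n" for j
      by (simp add: int_nth_add_ones[OF step that] int_nth_lee_step[OF ones that]
          int_nth_lee_step[OF w that] int_nth_add_ones[OF w that] mod_simps ac_simps)
  qed
qed

lemma even_nth_add_ones:
  assumes "even q" "w \<in> words q n" "k < n"
  shows "even (add_ones q n w ! k) \<longleftrightarrow> odd (w ! k)"
proof -
  have "even (add_ones q n w ! k) \<longleftrightarrow> even (int (add_ones q n w ! k))" by simp
  also have "\<dots> \<longleftrightarrow> even ((int (w ! k) + 1) mod int q)" by (simp add: int_nth_add_ones[OF assms(2,3)])
  also have "\<dots> \<longleftrightarrow> even (int (w ! k) + 1)" using assms(1) by (simp add: dvd_mod_iff)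
  finally show ?thesis by simp
qed

lemma funpow_add_ones:
  assumes w: "w \<in> words q n" and "0 < q"
  shows "(add_ones q n ^^ m) w \<in> words q n \<and>
    (\<forall>k < n. int ((add_ones q n ^^ m) w ! k) = (int (w ! k) + int m) mod int q)"
proof (induction m)
  case 0
  then show ?case using w words_nth_less[OF w] by simp
next
  case (Suc m)
  then show ?case
    using \<open>0 < q\<close> by (simp add: add_ones_in_words int_nth_add_ones mod_add_right_eq ac_simps)
qed

lemma funpow_add_ones_self:
  assumes w: "w \<in> words q n" and "0 < q"
  shows "(add_ones q n ^^ q) w = w"
  using funpow_add_ones[OF assms, of q] by (intro words_eqI[OF _ w]) simp_all

lemma lee_coord_dist_zero:
  assumes "x < q" "y < q" "min (nat \<bar>int x - int y\<bar>) (q - nat \<bar>int x - int y\<bar>) = 0"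
  shows "x = y"
  using assms by linarith

lemma lee_coord_dist_one:
  assumes "x < q" "y < q" "min (nat \<bar>int x - int y\<bar>) (q - nat \<bar>int x - int y\<bar>) = 1"
  shows "\<exists>e \<in> {1, -1}. int y = (int x + e) mod int q"
proof -
  have "y = x + 1 \<or> x = y + 1 \<or> x + 1 = q \<and> y = 0 \<or> x = 0 \<and> y + 1 = q"
    using assms by linarith
  then have "int y = (int x + 1) mod int q \<or> int y = (int x - 1) mod int q"
  proof (elim disjE conjE)
    assume "y = x + 1"
    then show ?thesis using assms(2) by simp
  next
    assume "x = y + 1"
    then show ?thesis using assms(2) by simp
  next
    assume "x + 1 = q" "y = 0"
    then have "int x + 1 = int q" by simp
    then show ?thesis using \<open>y = 0\<close> by simp
  next
    assume "x = 0" "y + 1 = q"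
    then show ?thesis by (simp add: zmod_minus1)
  qed
  then show ?thesis by auto
qed

lemma lee_dist_one_imp_lee_step:
  assumes v: "v \<in> words q n" and u: "u \<in> words q n" and "lee_dist q v u = 1"
  shows "\<exists>k < n. \<exists>e \<in> {1, -1}. u = lee_step q v k e"
proof -
  define d where "d i = min (nat \<bar>int (v ! i) - int (u ! i)\<bar>) (q - nat \<bar>int (v ! i) - int (u ! i)\<bar>)"
    for i
  have "sum d {..<n} = 1" using assms by (simp add: lee_dist_def words_def d_def)
  then have "\<exists>k \<in> {..<n}. d k = 1 \<and> (\<forall>j \<in> {..<n}. k \<noteq> j \<longrightarrow> d j = 0)"
    by (simp only: sum_eq_1_iff finite_lessThan)
  then obtain k where "k \<in> {..<n}" "d k = 1" and others: "\<forall>j \<in> {..<n}. k \<noteq> j \<longrightarrow> d j = 0"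
    by (elim bexE conjE)
  then have k: "k < n" by simp
  obtain e where e: "e \<in> {1, -1}" "int (u ! k) = (int (v ! k) + e) mod int q"
    using lee_coord_dist_one[OF words_nth_less[OF v k] words_nth_less[OF u k]]
      \<open>d k = 1\<close>[unfolded d_def] by blast
  have "u = lee_step q v k e"
  proof (rule words_eqI[OF u])
    show "lee_step q v k e \<in> words q n"
      using words_nth_less[OF v k] by (intro lee_step_in_words[OF v]) simp
    show "int (u ! j) mod int q = int (lee_step q v k e ! j) mod int q" if "j < n" for j
    proof (cases "j = k")
      case True
      then show ?thesis using int_nth_lee_step[OF v k, of k e] e(2) by simp
    next
      case False
      then have "d j = 0" using others that by simp
      then have "v ! j = u ! j" unfolding d_def
        by (rule lee_coord_dist_zero[OF words_nth_less[OF v that] words_nth_less[OF u that]])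
      then show ?thesis using False by (simp add: int_nth_lee_step[OF v that])
    qed
  qed
  with k e(1) show ?thesis by blast
qed

lemma three_unit_moves_eq_one:
  fixes a b c d :: 'a and s0 s1 s2 s3 q :: int
  assumes "4 \<le> q" and signs: "s0 \<in> {1, -1}" "s1 \<in> {1, -1}" "s2 \<in> {1, -1}" "s3 \<in> {1, -1}"
    and cong: "\<And>j. q dvd (if j = a then s0 else 0) + (if j = b then s1 else 0)
                        + (if j = c then s2 else 0) - (if j = d then s3 else 0)"
    and no_return: "\<not> (b = a \<and> s1 = - s0)" "\<not> (c = b \<and> s2 = - s1)"
  shows "c = a \<and> (b = a \<longleftrightarrow> s2 = s0)"
proof -
  let ?X = "\<lambda>j. (if j = a then s0 else 0) + (if j = b then s1 else 0)
                 + (if j = c then s2 else 0) - (if j = d then s3 else 0)"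
  have small: "?X j = 0 \<or> 4 \<le> \<bar>?X j\<bar>" for j
    using dvd_imp_le_int[OF _ cong[of j]] \<open>4 \<le> q\<close> by fastforce
  have "c = a"
  proof (rule ccontr)
    assume "c \<noteq> a"
    show False
    proof (cases "b = a")
      case True
      then show False using small[of a] \<open>c \<noteq> a\<close> no_return(1) signs by (auto split: if_splits)
    next
      case False
      then have "d = a" "s3 = s0" using small[of a] \<open>c \<noteq> a\<close> signs by (auto split: if_splits)
      then show False using small[of c] \<open>c \<noteq> a\<close> no_return(2) signs by (auto split: if_splits)
    qed
  qed
  moreover have "b = a \<longleftrightarrow> s2 = s0"
  proof (cases "b = a")
    case True
    then show ?thesis using \<open>c = a\<close> no_return signs by auto
  next
    case False
    then have "d = b" using small[of b] \<open>c = a\<close> signs by (auto split: if_splits)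
    then have "s2 = - s0" using small[of a] \<open>c = a\<close> False signs by (auto split: if_splits)
    then show ?thesis using False signs by auto
  qed
  ultimately show ?thesis ..
qed

locale lee_walk =
  fixes q n :: nat and h :: "int \<Rightarrow> nat list" and K :: "int \<Rightarrow> nat" and S :: "int \<Rightarrow> int"
  assumes walk_in_words: "h i \<in> words q n"
    and move_coord: "K i < n"
    and move_sign: "S i \<in> {1, -1}"
    and walk_move: "h (i + 1) = lee_step q (h i) (K i) (S i)"
begin

lemma int_nth_walk:
  "k < n \<Longrightarrow> int (h (i + 1) ! k) = (int (h i ! k) + (if k = K i then S i else 0)) mod int q"
  by (simp add: walk_move int_nth_lee_step[OF walk_in_words])

lemma walk_return:
  assumes "K (i + 1) = K i" "S (i + 1) = - S i"
  shows "h (i + 2) = h i"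
proof -
  have "h (i + 2) = lee_step q (lee_step q (h i) (K i) (S i)) (K i) (- S i)"
    using walk_move[of "i + 1"] walk_move[of i] assms by (simp add: add.assoc)
  also have "\<dots> = h i" by (rule lee_step_inverse[OF walk_in_words move_coord])
  finally show ?thesis .
qed

lemma three_moves_eq_one:
  assumes "4 \<le> q" and jump: "h (j + 3) = lee_step q (h j) d s" "d < n" "s \<in> {1, -1}"
    and no_return: "h (j + 2) \<noteq> h j" "h (j + 3) \<noteq> h (j + 1)"
  shows "K (j + 2) = K j \<and> (K (j + 1) = K j \<longleftrightarrow> S (j + 2) = S j)"
proof (rule three_unit_moves_eq_one)
  let ?u = "\<lambda>k i. if k = K i then S i else 0"
  show "int q dvd ?u k j + ?u k (j + 1) + ?u k (j + 2) - (if k = d then s else 0)" for k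
  proof (cases "k < n")
    case True
    define u where "u i = (if k = K i then S i else 0)" for i
    have step: "int (h (i + 1) ! k) = (int (h i ! k) + u i) mod int q" for i
      unfolding u_def by (rule int_nth_walk[OF True])
    have "int (h (j + 3) ! k) = ((int (h (j + 1) ! k) + u (j + 1)) mod int q + u (j + 2)) mod int q"
      using step[of "j + 2"] step[of "j + 1"] by (simp add: add.assoc)
    also have "\<dots> = (int (h j ! k) + u j + u (j + 1) + u (j + 2)) mod int q"
      unfolding step[of j] by (simp add: mod_simps)
    finally have "int (h (j + 3) ! k) = (int (h j ! k) + u j + u (j + 1) + u (j + 2)) mod int q" .
    moreover have "int (h (j + 3) ! k) = (int (h j ! k) + (if k = d then s else 0)) mod int q"
      using jump(1) int_nth_lee_step[OF walk_in_words True] by simp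
    ultimately have "(int (h j ! k) + u j + u (j + 1) + u (j + 2)) mod int q
        = (int (h j ! k) + (if k = d then s else 0)) mod int q"
      by simp
    then have "int q dvd (int (h j ! k) + u j + u (j + 1) + u (j + 2))
        - (int (h j ! k) + (if k = d then s else 0))"
      by (simp only: mod_eq_dvd_iff)
    then have "int q dvd u j + u (j + 1) + u (j + 2) - (if k = d then s else 0)"
      by (simp add: algebra_simps split del: if_split)
    then show ?thesis by (simp only: u_def)
  next
    case False
    then have "k \<noteq> K j" "k \<noteq> K (j + 1)" "k \<noteq> K (j + 2)" "k \<noteq> d"
      using move_coord[of j] move_coord[of "j + 1"] move_coord[of "j + 2"] jump(2) by auto
    then show ?thesis by simp
  qed
  show "\<not> (K (j + 1) = K j \<and> S (j + 1) = - S j)"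
    using walk_return no_return(1) by blast
  show "\<not> (K (j + 2) = K (j + 1) \<and> S (j + 2) = - S (j + 1))"
    using walk_return[of "j + 1"] no_return(2) by (simp add: add.assoc) blast
  show "4 \<le> int q" using \<open>4 \<le> q\<close> by simp
qed (use move_sign jump(3) in blast)+

lemma neg_one_power_walk:
  assumes "even q" "k < n"
  shows "(-1::int) ^ (h (i + 1) ! k) = (if k = K i then - ((-1) ^ (h i ! k)) else (-1) ^ (h i ! k))"
proof (cases "k = K i")
  case True
  then have "even (h (i + 1) ! k) \<longleftrightarrow> odd (h i ! k)"
    using even_nth_lee_step[OF assms(1) walk_in_words assms(2) move_sign] walk_move by simp
  then show ?thesis using True by (simp add: minus_one_power_iff)
next
  case False
  then show ?thesis by (simp add: walk_move nth_lee_step_other)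
qed

lemma sign_parity_invariant:
  assumes "even q"
    and pattern: "\<And>j. even j \<Longrightarrow> K (j + 2) = K j \<and> (K (j + 1) = K j \<longleftrightarrow> S (j + 2) = S j)"
  shows "K (2 * int t) = K 0 \<and>
    S (2 * int t) * (-1) ^ (h (2 * int t) ! K 0) = S 0 * (-1) ^ (h 0 ! K 0)"
proof (induction t)
  case (Suc t)
  define j where "j = 2 * int t"
  let ?p = "\<lambda>i. (-1::int) ^ (h i ! K 0)"
  have K: "K j = K 0" "K (j + 2) = K 0" and inv: "S j * ?p j = S 0 * ?p 0"
    using Suc pattern[of j] by (simp_all add: j_def)
  have p1: "?p (j + 1) = - ?p j"
    using neg_one_power_walk[OF assms(1) move_coord[of 0], of j] K by simp
  have p2: "?p (j + 2) = (if K (j + 1) = K 0 then - ?p (j + 1) else ?p (j + 1))"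
    using neg_one_power_walk[OF assms(1) move_coord[of 0], of "j + 1"] by (simp add: add.assoc)
  have "S (j + 2) * ?p (j + 2) = S j * ?p j"
  proof (cases "K (j + 1) = K 0")
    case True
    then show ?thesis using p1 p2 pattern[of j] K by (simp add: j_def)
  next
    case False
    then have "S (j + 2) = - S j"
      using pattern[of j] K move_sign[of j] move_sign[of "j + 2"] by (auto simp: j_def)
    then show ?thesis using p1 p2 False by simp
  qed
  moreover have "2 * int (Suc t) = j + 2" by (simp add: j_def)
  ultimately show ?case using K inv by (simp only:)
qed simp

lemma translated_move_reversed:
  assumes "4 \<le> q" "even q" and same_coord: "K m = K i"
    and translate: "h m = add_ones q n (h (i + 1))" "h (m + 1) = add_ones q n (h i)"
  shows "S m = - S i \<and> even (h m ! K i) = even (h i ! K i)"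
proof
  let ?k = "K i" and ?x = "int (h i ! K i)"
  have k: "?k < n" by (rule move_coord)
  have "(?x + 1) mod int q = int (h (m + 1) ! ?k)"
    using int_nth_add_ones[OF walk_in_words k] translate(2) by simp
  also have "\<dots> = ((int (h (i + 1) ! ?k) + 1) mod int q + S m) mod int q"
    using int_nth_walk[OF k, of m] int_nth_add_ones[OF walk_in_words k] translate(1) same_coord
    by simp
  also have "\<dots> = (((?x + S i) mod int q + 1) mod int q + S m) mod int q"
    using int_nth_walk[OF k, of i] by simp
  also have "\<dots> = (?x + 1 + (S i + S m)) mod int q" by (simp add: mod_simps ac_simps)
  finally have "int q dvd S i + S m"
    by (metis add_diff_cancel_left' mod_eq_dvd_iff)
  then have "S i + S m = 0"
    using dvd_imp_le_int[of "S i + S m" "int q"] move_sign[of i] move_sign[of m] \<open>4 \<le> q\<close>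
    by fastforce
  then show "S m = - S i" by simp
  have "even (h m ! ?k) \<longleftrightarrow> odd (h (i + 1) ! ?k)"
    using even_nth_add_ones[OF \<open>even q\<close> walk_in_words k] translate(1) by simp
  also have "\<dots> \<longleftrightarrow> even (h i ! ?k)"
    using even_nth_lee_step[OF \<open>even q\<close> walk_in_words k move_sign] walk_move by simp
  finally show "even (h m ! ?k) = even (h i ! ?k)" .
qed

lemma alternating_shift_impossible:
  assumes "4 \<le> q" "even q" "even M" "0 \<le> M"
    and no_return: "\<And>i. h (i + 2) \<noteq> h i"
    and shift_even: "\<And>i. even i \<Longrightarrow> add_ones q n (h i) = h (i + M + 1)"
    and shift_odd: "\<And>i. odd i \<Longrightarrow> add_ones q n (h i) = h (i + M - 1)"
  shows False
proof -
  have pattern: "K (j + 2) = K j \<and> (K (j + 1) = K j \<longleftrightarrow> S (j + 2) = S j)" if "even j" for j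
  proof -
    define i where "i = j - M + 1"
    have "odd i" using that \<open>even M\<close> by (simp add: i_def)
    then have "h j = add_ones q n (h i)" "h (j + 3) = add_ones q n (h (i + 1))"
      using shift_odd[of i] shift_even[of "i + 1"] by (simp_all add: i_def algebra_simps)
    then have "h (j + 3) = lee_step q (h j) (K i) (S i)"
      by (simp add: walk_move add_ones_lee_step[OF walk_in_words])
    then show ?thesis
      using three_moves_eq_one[OF \<open>4 \<le> q\<close> _ move_coord move_sign] no_return[of j] no_return[of "j + 1"]
      by (simp add: add.assoc)
  qed
  define t where "t = nat (M div 2)"
  have t: "M = 2 * int t" using \<open>even M\<close> \<open>0 \<le> M\<close> by (simp add: t_def)
  have KM: "K M = K 0" and inv: "S M * (-1) ^ (h M ! K 0) = S 0 * (-1) ^ (h 0 ! K 0)"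
    using sign_parity_invariant[OF \<open>even q\<close> pattern, of t] t by simp_all
  have "S M = - S 0 \<and> even (h M ! K 0) = even (h 0 ! K 0)"
    using translated_move_reversed[OF \<open>4 \<le> q\<close> \<open>even q\<close> KM] shift_odd[of 1] shift_even[of 0]
    by simp
  then show False using inv move_sign[of 0] by (auto simp: minus_one_power_iff)
qed

end

(* The code extended N-periodically to the integers (N = q^n, M = q^(n-1) in the theorem);
   E i is the sign epsilon_i of the shift at i. *)
locale lee_shift_cycle =
  fixes q n :: nat and N M :: int and g :: "int \<Rightarrow> nat list" and E :: "int \<Rightarrow> int"
  assumes q_ge_4: "4 \<le> q" and even_q: "even q"
    and N_eq: "N = int q * M" and even_M: "even M" and M_gt_1: "1 < M"
    and cycle_in_words: "g i \<in> words q n"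
    and cycle_eq_iff: "g i = g j \<longleftrightarrow> i mod N = j mod N"
    and cycle_adjacent: "lee_dist q (g i) (g (i + 1)) = 1"
    and shift_sign: "E i \<in> {1, -1}"
    and cycle_shift: "add_ones q n (g i) = g (i + M + E i)"
begin

lemma q_less_N: "int q < N"
  using N_eq M_gt_1 q_ge_4 by simp

lemma cycle_periodic: "g (i + N) = g i"
  by (simp add: cycle_eq_iff)

lemma cycle_eq_close:
  assumes "g i = g j" "\<bar>i - j\<bar> \<le> 2"
  shows "i = j"
proof (rule ccontr)
  assume "i \<noteq> j"
  have "N dvd i - j" using assms(1) cycle_eq_iff mod_eq_dvd_iff by blast
  then have "\<bar>N\<bar> \<le> \<bar>i - j\<bar>" using \<open>i \<noteq> j\<close> by (intro dvd_imp_le_int) simp_all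
  then show False using assms(2) q_less_N q_ge_4 by simp
qed

lemma cycle_no_return: "g (i + 2) \<noteq> g i"
proof
  assume "g (i + 2) = g i"
  then have "i + 2 = i" by (rule cycle_eq_close) simp
  then show False by simp
qed

lemma sign_periodic: "E (i + N) = E i"
proof -
  have "g (i + M + E (i + N)) = add_ones q n (g (i + N))"
    using cycle_shift[of "i + N"] cycle_periodic[of "i + M + E (i + N)"] by (simp add: ac_simps)
  also have "\<dots> = g (i + M + E i)" by (simp add: cycle_periodic cycle_shift)
  finally have "i + M + E (i + N) = i + M + E i"
    by (rule cycle_eq_close) (use shift_sign[of i] shift_sign[of "i + N"] in auto)
  then show ?thesis by simp
qed

lemma sign_step_two_pos: "E i = 1 \<Longrightarrow> E (i + 2) = 1"
proof (rule ccontr)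
  assume "E i = 1" "E (i + 2) \<noteq> 1"
  then have "E (i + 2) = -1" using shift_sign[of "i + 2"] by simp
  then have "add_ones q n (g (i + 2)) = add_ones q n (g i)"
    using cycle_shift[of i] cycle_shift[of "i + 2"] \<open>E i = 1\<close> by (simp add: algebra_simps)
  then have "g (i + 2) = g i" by (rule add_ones_inj[OF cycle_in_words cycle_in_words])
  then show False using cycle_no_return by blast
qed

lemma sign_step_two: "E (i + 2) = E i"
proof (rule ccontr)
  assume "E (i + 2) \<noteq> E i"
  then have "E i = -1" "E (i + 2) = 1"
    using sign_step_two_pos[of i] shift_sign[of i] shift_sign[of "i + 2"] by auto
  have "E (i + 2 + 2 * int k) = 1" for k
  proof (induction k)
    case (Suc k)
    then show ?case using sign_step_two_pos[of "i + 2 + 2 * int k"] by (simp add: algebra_simps)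
  qed (simp add: \<open>E (i + 2) = 1\<close>)
  moreover obtain r where "N = 2 * r" using N_eq even_M by (auto elim: evenE)
  then have "i + N = i + 2 + 2 * int (nat (r - 1))" using q_less_N q_ge_4 by simp
  ultimately have "E (i + N) = 1" by metis
  then show False using sign_periodic \<open>E i = -1\<close> by simp
qed

lemma sign_by_parity: "E i = (if even i then E 0 else E 1)"
proof -
  interpret periodic_fun_simple E 2 by standard (rule sign_step_two)
  have "E i = E (i mod 2 + of_int (i div 2) * 2)" by simp
  also have "\<dots> = E (i mod 2)" by (rule plus_of_int)
  finally show ?thesis by (simp add: even_iff_mod_2_eq_zero odd_iff_mod_2_eq_one)
qed

lemma constant_sign_impossible:
  assumes "E 0 = E 1"
  shows False
proof -
  define e where "e = E 0"
  have shift: "add_ones q n (g i) = g (i + (M + e))" for i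
    using cycle_shift[of i] sign_by_parity[of i] assms by (simp add: e_def add.assoc)
  have "(add_ones q n ^^ m) (g 0) = g (int m * (M + e))" for m
    by (induction m) (simp_all add: shift algebra_simps)
  then have "g (int q * (M + e)) = (add_ones q n ^^ q) (g 0)" by simp
  also have "\<dots> = g 0" using funpow_add_ones_self[OF cycle_in_words] q_ge_4 by simp
  finally have "g (int q * (M + e)) = g 0" .
  then have "N dvd int q * (M + e)" using cycle_eq_iff by (simp add: dvd_eq_mod_eq_0)
  then have "N dvd N + int q * e" by (simp add: N_eq distrib_left)
  then have "N dvd int q * e" by (simp add: dvd_add_right_iff)
  then have "N dvd int q"
    using shift_sign[of 0] by (auto simp: e_def)
  then show False using q_less_N q_ge_4 zdvd_imp_le by fastforce
qed

lemma shifted_cycle: "lee_shift_cycle q n N M (\<lambda>i. g (i + 1)) (\<lambda>i. E (i + 1))"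
proof
  show "g (i + 1) = g (j + 1) \<longleftrightarrow> i mod N = j mod N" for i j
    by (simp add: cycle_eq_iff mod_eq_dvd_iff)
  show "add_ones q n (g (i + 1)) = g (i + M + E (i + 1) + 1)" for i
    by (simp add: cycle_shift ac_simps)
  show "lee_dist q (g (i + 1)) (g (i + 1 + 1)) = 1" for i by (rule cycle_adjacent)
qed (use q_ge_4 even_q N_eq even_M M_gt_1 cycle_in_words cycle_adjacent shift_sign in simp_all)

lemma alternating_sign_impossible:
  assumes "E 0 = 1" "E 1 = -1"
  shows False
proof -
  have "\<forall>i. \<exists>k e. k < n \<and> e \<in> {1, -1} \<and> g (i + 1) = lee_step q (g i) k e"
    using lee_dist_one_imp_lee_step[OF cycle_in_words cycle_in_words cycle_adjacent] by blast
  then obtain K S where "\<And>i. K i < n \<and> S i \<in> {1, -1} \<and> g (i + 1) = lee_step q (g i) (K i) (S i)"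
    by metis
  then interpret lee_walk q n g K S
    by unfold_locales (simp_all add: cycle_in_words)
  show False
  proof (rule alternating_shift_impossible[OF q_ge_4 even_q even_M _ cycle_no_return])
    show "0 \<le> M" using M_gt_1 by simp
    show "add_ones q n (g i) = g (i + M + 1)" if "even i" for i
      using cycle_shift[of i] sign_by_parity[of i] assms that by simp
    show "add_ones q n (g i) = g (i + M - 1)" if "odd i" for i
      using cycle_shift[of i] sign_by_parity[of i] assms that by simp
  qed
qed

lemma inconsistent: False
proof (cases "E 0 = E 1")
  case True
  then show False by (rule constant_sign_impossible)
next
  case False
  then consider "E 0 = 1" "E 1 = -1" | "E 1 = 1" "E 2 = -1"
    using shift_sign[of 0] shift_sign[of 1] sign_step_two[of 0] by auto
  then show False
  proof cases
    case 1
    then show False by (rule alternating_sign_impossible)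
  next
    case 2
    interpret shifted: lee_shift_cycle q n N M "\<lambda>i. g (i + 1)" "\<lambda>i. E (i + 1)"
      by (rule shifted_cycle)
    show False using 2 by (intro shifted.alternating_sign_impossible) simp_all
  qed
qed

end

lemma lee_shift_cycle_of_code:
  fixes G :: "nat \<Rightarrow> nat list" and N M :: nat
  assumes params: "4 \<le> q" "even q" "N = q * M" "even M" "1 < M"
    and bij: "bij_betw G {0..<N} (words q n)"
    and adjacent: "\<forall>i < N. lee_dist q (G i) (G ((i + 1) mod N)) = 1"
    and shift: "\<forall>i < N. \<exists>e :: int \<in> {1, -1}.
                  add_ones q n (G i) = G (nat ((int i + int M + e) mod int N))"
  shows "\<exists>g E. lee_shift_cycle q n (int N) (int M) g E"
proof -
  have "0 < N" using params by simp
  define g where "g i = G (nat (i mod int N))" for i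
  have index: "nat (i mod int N) < N" "int (nat (i mod int N)) = i mod int N" for i
    using \<open>0 < N\<close> by (simp_all add: nat_less_iff)
  have "\<exists>e \<in> {1, -1}. add_ones q n (g i) = g (i + int M + e)" for i
  proof -
    obtain e where "e \<in> {1, -1}"
      "add_ones q n (g i) = G (nat ((int (nat (i mod int N)) + int M + e) mod int N))"
      using shift index(1)[of i] unfolding g_def by blast
    moreover have "(int (nat (i mod int N)) + int M + e) mod int N = (i + int M + e) mod int N"
      unfolding index(2) by (metis add.assoc mod_add_left_eq)
    ultimately show ?thesis by (auto simp: g_def)
  qed
  then obtain E where E: "\<And>i. E i \<in> {1, -1} \<and> add_ones q n (g i) = g (i + int M + E i)"
    by metis
  have "lee_shift_cycle q n (int N) (int M) g E"
  proof
    show "g i \<in> words q n" for i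
      unfolding g_def using bij_betw_apply[OF bij] index[of i] by simp
    show "g i = g j \<longleftrightarrow> i mod int N = j mod int N" for i j
    proof
      assume "g i = g j"
      then have "nat (i mod int N) = nat (j mod int N)"
        using inj_onD[OF bij_betw_imp_inj_on[OF bij]] index(1) unfolding g_def by simp
      then show "i mod int N = j mod int N" using index(2)[of i] index(2)[of j] by metis
    qed (simp add: g_def)
    show "lee_dist q (g i) (g (i + 1)) = 1" for i
    proof -
      have "int ((nat (i mod int N) + 1) mod N) = (int (nat (i mod int N)) + 1) mod int N"
        by (simp only: of_nat_mod of_nat_add of_nat_1)
      also have "\<dots> = (i + 1) mod int N" by (simp only: index(2) mod_add_left_eq)
      finally have "(nat (i mod int N) + 1) mod N = nat ((i + 1) mod int N)" by linarith
      then show ?thesis using adjacent index(1)[of i] unfolding g_def by metis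
    qed
  qed (use params E in simp_all)
  then show ?thesis by blast
qed

theorem theorem4:
  fixes q n :: nat
  assumes "q \<ge> 4" and "even q" and "n \<ge> 3" and "odd n"
  shows "\<not> (\<exists>G :: nat \<Rightarrow> nat list.
            bij_betw G {0..<q^n} (words q n) \<and>
            (\<forall>i < q^n. lee_dist q (G i) (G ((i + 1) mod q^n)) = 1) \<and>
            (\<forall>i < q^n. \<exists>e :: int \<in> {1, -1}.
               word_add q (G i) (all_ones n)
                 = G (nat ((int i + int (q^(n-1)) + e) mod int (q^n)))))"
proof -
  have "q ^ n = q * q ^ (n - 1)" using \<open>n \<ge> 3\<close> by (simp flip: power_Suc)
  moreover have "even (q ^ (n - 1))" using \<open>even q\<close> \<open>n \<ge> 3\<close> by simp
  moreover have "1 < q ^ (n - 1)" using \<open>q \<ge> 4\<close> \<open>n \<ge> 3\<close> by (intro one_less_power) auto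
  ultimately show ?thesis
    using lee_shift_cycle_of_code[OF \<open>q \<ge> 4\<close> \<open>even q\<close>, where N = "q ^ n" and M = "q ^ (n - 1)"]
      lee_shift_cycle.inconsistent
    by blast
qed

end
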